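(* Let $\bar\pi^*$ be an optimal (cost-minimizing) policy for $\bar{\mathcal M}$ with state-action value $\bar Q^*$ and state value $\bar V^*$. Let $G_0$ be the set of intervention rules $(\bar Q,\mu,0)$ (threshold $\eta=0$) that are admissible and satisfy $\bar Q(d_0,\mu)=\bar V^*(d_0)$. Then $\mathcal G^*=(\bar Q^*,\bar\pi^*,0)\in G_0$, and for any $\mathcal G\in G_0$ and any policy $\pi$, $$\mathrm{Supp}_{\mathcal S\times\mathcal A}(\tilde d^{\pi})\subseteq \mathrm{Supp}_{\mathcal S\times\mathcal A}(\tilde d^{*,\pi}),$$ where $\tilde d^\pi$ and $\tilde d^{*,\pi}$ are the discounted state-action distributions of $\pi$ in the absorbing MDPs induced by $\mathcal G$ and $\mathcal G^*$ respectively, and $\mathrm{Supp}_{\mathcal S\times\mathcal A}(d)=\{(s,a)\in\mathcal S\times\mathcal A: d(s,a)>0\}$.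
   Context: $\mathcal M=(\mathcal S,\mathcal A,P,r,\gamma)$ is a discounted MDP with discrete state and action spaces (minima over actions attained), reward $r\in[0,1]$, discount $\gamma\in[0,1)$, initial distribution $d_0$. $\mathcal S$ contains two distinguished states $s_\triangleright,s_\circ$; $\mathcal S_{\mathrm{unsafe}}=\{s_\triangleright,s_\circ\}$, $\mathcal S_{\mathrm{safe}}=\mathcal S\setminus\mathcal S_{\mathrm{unsafe}}$; from $s_\triangleright$ every action leads to $s_\circ$ w.p. 1, $s_\circ$ is absorbing, $r=0$ on $\mathcal S_{\mathrm{unsafe}}$, $d_0(s_\circ)=0$. Cost $c(s,a)=\mathbb 1\{s=s_\triangleright\}$; $\bar{\mathcal M}=(\mathcal S,\mathcal A,P,c,\gamma)$; an optimal policy of $\bar{\mathcal M}$ minimizes the expected discounted cost from every state. For $g:\mathcal S\times\mathcal A\to\mathbb R$, $g(s,\mu)=\mathbb E_{a\sim\mu(\cdot|s)}g(s,a)$, $g(d_0,\mu)=\mathbb E_{s\sim d_0}g(s,\mu)$; $\bar V^*(d_0)=\mathbb E_{s\sim d_0}\bar V^*(s)$. Intervention rule: a triple $\mathcal G=(\bar Q,\mu,\eta)$ with backup policy $\mu$, $\eta\in[0,1]$, $\bar Q:\mathcal S_{\mathrm{safe}}\times\mathcal A\to[0,1]$ extended by $\bar Q(s_\triangleright,a)=1$, $\bar Q(s_\circ,a)=0$; intervention set $\mathcal I=\{(s,a)\in\mathcal S_{\mathrm{safe}}\times\mathcal A:\bar Q(s,a)-\bar Q(s,\mu)>\eta\}$.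 It is admissible if for all $s\in\mathcal S_{\mathrm{safe}},a$: $\bar Q(s,a)\in[0,\gamma]$ and $\bar Q(s,a)\ge c(s,a)+\gamma\mathbb E_{s'\sim P(\cdot|s,a)}[\bar Q(s',\mu)]$. Absorbing MDP induced by $\mathcal G$ (with a constant $\tilde R\le0$): state space $\mathcal S\cup\{s_\dagger\}$; reward $\tilde R$ on $\mathcal I$, $0$ at $s_\dagger$, $r$ otherwise; from $(s,a)\in\mathcal I$ or from $s_\dagger$ the next state is $s_\dagger$ w.p. 1, otherwise transitions follow $P$. Policies are extended to $s_\dagger$ arbitrarily. The discounted state-action distribution of $\pi$ is $\tilde d^\pi(s,a)=(1-\gamma)\sum_t\gamma^t\Pr(s_t=s,a_t=a)$ for trajectories of $\pi$ from $s_0\sim d_0$ in this MDP. *)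

theory Defs
  imports "HOL-Probability.Probability"
begin

fun sdist :: "('x \<Rightarrow> 'a \<Rightarrow> 'x pmf) \<Rightarrow> ('x \<Rightarrow> 'a pmf) \<Rightarrow> 'x pmf \<Rightarrow> nat \<Rightarrow> 'x pmf" where
  "sdist K p init 0 = init"
| "sdist K p init (Suc n) = bind_pmf (sdist K p init n) (\<lambda>x. bind_pmf (p x) (\<lambda>a. K x a))"

definition sadist :: "('x \<Rightarrow> 'a \<Rightarrow> 'x pmf) \<Rightarrow> ('x \<Rightarrow> 'a pmf) \<Rightarrow> 'x pmf \<Rightarrow> nat \<Rightarrow> ('x \<times> 'a) pmf" where
  "sadist K p init n = bind_pmf (sdist K p init n) (\<lambda>x. map_pmf (\<lambda>a. (x, a)) (p x))"

definition disc_sa :: "('x \<Rightarrow> 'a \<Rightarrow> 'x pmf) \<Rightarrow> ('x \<Rightarrow> 'a pmf) \<Rightarrow> 'x pmf \<Rightarrow> real \<Rightarrow> 'x \<times> 'a \<Rightarrow> real" where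
  "disc_sa K p init \<gamma> xa = (1 - \<gamma>) * (\<Sum>t. \<gamma> ^ t * pmf (sadist K p init t) xa)"

definition value_fn :: "('x \<Rightarrow> 'a \<Rightarrow> 'x pmf) \<Rightarrow> ('x \<Rightarrow> 'a \<Rightarrow> real) \<Rightarrow> real \<Rightarrow> ('x \<Rightarrow> 'a pmf) \<Rightarrow> 'x \<Rightarrow> real" where
  "value_fn K c \<gamma> p x =
     (\<Sum>t. \<gamma> ^ t * measure_pmf.expectation (sadist K p (return_pmf x) t) (\<lambda>(y, a). c y a))"

definition qvalue :: "('x \<Rightarrow> 'a \<Rightarrow> 'x pmf) \<Rightarrow> ('x \<Rightarrow> 'a \<Rightarrow> real) \<Rightarrow> real \<Rightarrow> ('x \<Rightarrow> 'a pmf) \<Rightarrow> 'x \<Rightarrow> 'a \<Rightarrow> real" where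
  "qvalue K c \<gamma> p x a = c x a + \<gamma> * measure_pmf.expectation (K x a) (\<lambda>y. value_fn K c \<gamma> p y)"

definition cost :: "'s \<Rightarrow> 's \<Rightarrow> 'a \<Rightarrow> real" where
  "cost s_tri s a = (if s = s_tri then 1 else 0)"

definition polQ :: "('s \<Rightarrow> 'a \<Rightarrow> real) \<Rightarrow> ('s \<Rightarrow> 'a pmf) \<Rightarrow> 's \<Rightarrow> real" where
  "polQ g \<mu> s = measure_pmf.expectation (\<mu> s) (\<lambda>a. g s a)"

definition safe :: "'s \<Rightarrow> 's \<Rightarrow> 's \<Rightarrow> bool" where
  "safe s_tri s_circ s \<longleftrightarrow> s \<noteq> s_tri \<and> s \<noteq> s_circ"

definition extQ :: "'s \<Rightarrow> 's \<Rightarrow> ('s \<Rightarrow> 'a \<Rightarrow> real) \<Rightarrow> 's \<Rightarrow> 'a \<Rightarrow> real" where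
  "extQ s_tri s_circ Q s a = (if s = s_tri then 1 else if s = s_circ then 0 else Q s a)"

definition interv_set :: "'s \<Rightarrow> 's \<Rightarrow> ('s \<Rightarrow> 'a \<Rightarrow> real) \<Rightarrow> ('s \<Rightarrow> 'a pmf) \<Rightarrow> real \<Rightarrow> ('s \<times> 'a) set" where
  "interv_set s_tri s_circ Q \<mu> \<eta> =
     {(s, a). safe s_tri s_circ s \<and>
        extQ s_tri s_circ Q s a - polQ (extQ s_tri s_circ Q) \<mu> s > \<eta>}"

definition admissible :: "('s \<Rightarrow> 'a \<Rightarrow> 's pmf) \<Rightarrow> real \<Rightarrow> 's \<Rightarrow> 's \<Rightarrow> ('s \<Rightarrow> 'a \<Rightarrow> real) \<Rightarrow> ('s \<Rightarrow> 'a pmf) \<Rightarrow> bool" where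
  "admissible P \<gamma> s_tri s_circ Q \<mu> \<longleftrightarrow>
     (\<forall>s a. safe s_tri s_circ s \<longrightarrow>
        0 \<le> Q s a \<and> Q s a \<le> \<gamma> \<and>
        Q s a \<ge> cost s_tri s a +
          \<gamma> * measure_pmf.expectation (P s a) (\<lambda>s'. polQ (extQ s_tri s_circ Q) \<mu> s'))"

text \<open>The set G_0 of admissible rules with threshold 0 and Qbar(d0,mu) = Vbar*(d0)
  (the value Vbar*(d0) is passed as parameter Vd0).\<close>
definition G0 :: "('s \<Rightarrow> 'a \<Rightarrow> 's pmf) \<Rightarrow> real \<Rightarrow> 's pmf \<Rightarrow> 's \<Rightarrow> 's \<Rightarrow> real \<Rightarrow>
    (('s \<Rightarrow> 'a \<Rightarrow> real) \<times> ('s \<Rightarrow> 'a pmf) \<times> real) set" where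
  "G0 P \<gamma> d0 s_tri s_circ Vd0 =
     {(Q, \<mu>, \<eta>). \<eta> = 0 \<and> admissible P \<gamma> s_tri s_circ Q \<mu> \<and>
        measure_pmf.expectation d0 (\<lambda>s. polQ (extQ s_tri s_circ Q) \<mu> s) = Vd0}"

text \<open>Absorbing MDP: state None is the absorbing state s_dagger.\<close>
definition abs_P :: "('s \<Rightarrow> 'a \<Rightarrow> 's pmf) \<Rightarrow> ('s \<times> 'a) set \<Rightarrow> 's option \<Rightarrow> 'a \<Rightarrow> 's option pmf" where
  "abs_P P I x a = (case x of None \<Rightarrow> return_pmf None
      | Some s \<Rightarrow> if (s, a) \<in> I then return_pmf None else map_pmf Some (P s a))"

definition abs_pol :: "('s \<Rightarrow> 'a pmf) \<Rightarrow> 's option \<Rightarrow> 'a pmf" where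
  "abs_pol \<pi> x = (case x of None \<Rightarrow> return_pmf undefined | Some s \<Rightarrow> \<pi> s)"

definition dtilde :: "('s \<Rightarrow> 'a \<Rightarrow> 's pmf) \<Rightarrow> real \<Rightarrow> 's pmf \<Rightarrow> ('s \<times> 'a) set \<Rightarrow> ('s \<Rightarrow> 'a pmf) \<Rightarrow> 's \<times> 'a \<Rightarrow> real" where
  "dtilde P \<gamma> d0 I \<pi> sa = disc_sa (abs_P P I) (abs_pol \<pi>) (map_pmf Some d0) \<gamma> (Some (fst sa), snd sa)"

definition supp_SA :: "('s \<times> 'a \<Rightarrow> real) \<Rightarrow> ('s \<times> 'a) set" where
  "supp_SA d = {sa. d sa > 0}"

end

theory Submission
  imports Defs
begin

text \<open>Let \<open>V\<close> be the optimal cost-to-go and \<open>W = Q(\<cdot>,\<mu>)\<close> for an admissible rule \<open>(Q,\<mu>,0)\<close>.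
  Admissibility makes \<open>W\<close> a supersolution of the Bellman equation of \<open>\<mu>\<close>, hence
  \<open>V \<le> V\<^sup>\<mu> \<le> W\<close>, and \<open>E\<^sub>d\<^sub>0 W = E\<^sub>d\<^sub>0 V\<close> forces \<open>W = V\<close> on the support of \<open>d\<^sub>0\<close>.
  At a state with \<open>W s = V s\<close> an action that the rule does not block satisfies
  \<open>V s \<le> Q\<^sup>*(s,a) \<le> c + \<gamma> E W \<le> Q(s,a) \<le> W s = V s\<close>, so it is not blocked by the optimal rule
  either, and the equalities force \<open>W = V\<close> again at every successor state.
  By induction every state-action pair reached in the absorbing MDP of the rule is reached in
  the absorbing MDP of the optimal rule at the same time.\<close>

lemma integrable_measure_pmf_bounded:
  fixes f :: "'x \<Rightarrow> real"
  assumes "\<And>x. \<bar>f x\<bar> \<le> B"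
  shows "integrable (measure_pmf M) f"
  by (rule measure_pmf.integrable_const_bound[where B=B]) (auto simp: assms)

lemma expectation_bind_pmf:
  fixes f :: "'x \<Rightarrow> real"
  assumes "\<And>x. \<bar>f x\<bar> \<le> B"
  shows "measure_pmf.expectation (bind_pmf M N) f
           = measure_pmf.expectation M (\<lambda>y. measure_pmf.expectation (N y) f)"
  unfolding measure_pmf_bind
  by (rule integral_bind[where K="count_space UNIV" and B=B and B'=1])
     (auto simp: assms intro: measure_pmf_in_subprob_algebra)

lemma expectation_pmf_bounds:
  fixes f :: "'x \<Rightarrow> real"
  assumes "\<And>x. a \<le> f x" "\<And>x. f x \<le> b"
  shows "a \<le> measure_pmf.expectation M f \<and> measure_pmf.expectation M f \<le> b"
proof -
  have "integrable (measure_pmf M) f"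
    by (rule integrable_measure_pmf_bounded[where B="\<bar>a\<bar> + \<bar>b\<bar>"])
       (smt (verit) assms)
  then show ?thesis
    using assms by (auto intro: measure_pmf.integral_ge_const measure_pmf.integral_le_const)
qed

lemma abs_expectation_pmf_le:
  fixes f :: "'x \<Rightarrow> real"
  assumes "\<And>x. \<bar>f x\<bar> \<le> B"
  shows "\<bar>measure_pmf.expectation M f\<bar> \<le> B"
proof -
  have "-B \<le> f x" "f x \<le> B" for x
    using assms[of x] by arith+
  then have "-B \<le> measure_pmf.expectation M f \<and> measure_pmf.expectation M f \<le> B"
    by (rule expectation_pmf_bounds)
  then show ?thesis
    by linarith
qed

lemma eq_on_set_pmf_if_expectation_le:
  fixes f g :: "'x \<Rightarrow> real"
  assumes le: "\<And>x. f x \<le> g x" and bounded: "\<And>x. \<bar>f x\<bar> \<le> B" "\<And>x. \<bar>g x\<bar> \<le> B"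
    and expectation_le: "measure_pmf.expectation M g \<le> measure_pmf.expectation M f"
    and x: "x \<in> set_pmf M"
  shows "f x = g x"
proof -
  have int: "integrable (measure_pmf M) f" "integrable (measure_pmf M) g"
    using bounded by (auto intro: integrable_measure_pmf_bounded)
  then have "measure_pmf.expectation M (\<lambda>y. g y - f y) = 0"
    using expectation_le integral_mono[OF int] le by simp
  then have "AE y in measure_pmf M. g y - f y = 0"
    using int le by (subst (asm) integral_nonneg_eq_0_iff_AE) auto
  then show ?thesis
    using x by (simp add: AE_measure_pmf_iff)
qed

lemma summable_discounted:
  fixes \<gamma> :: real
  assumes "0 \<le> \<gamma>" "\<gamma> < 1" "\<And>t. \<bar>f t\<bar> \<le> 1"
  shows "summable (\<lambda>t. \<gamma> ^ t * f t)"
proof (rule summable_comparison_test[where g="\<lambda>t. \<gamma> ^ t"])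
  show "\<exists>N. \<forall>t\<ge>N. norm (\<gamma> ^ t * f t) \<le> \<gamma> ^ t"
    using assms by (auto simp: abs_mult intro!: exI[of _ 0] mult_left_le)
  show "summable (\<lambda>t. \<gamma> ^ t)"
    using assms by (simp add: summable_geometric)
qed

lemma sdist_bind_init: "sdist K p init n = bind_pmf init (\<lambda>x. sdist K p (return_pmf x) n)"
  by (induction n) (simp_all add: bind_return_pmf' bind_assoc_pmf)

lemma sdist_Suc_init:
  "sdist K p init (Suc n) = sdist K p (bind_pmf init (\<lambda>x. bind_pmf (p x) (K x))) n"
  by (induction n) simp_all

lemma sadist_Suc_return:
  "sadist K p (return_pmf x) (Suc n)
     = bind_pmf (bind_pmf (p x) (K x)) (\<lambda>y. sadist K p (return_pmf y) n)"
  unfolding sadist_def sdist_Suc_init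
  by (subst sdist_bind_init) (simp add: bind_return_pmf bind_assoc_pmf)

lemma set_pmf_sadist:
  "(x, a) \<in> set_pmf (sadist K p init n) \<longleftrightarrow> x \<in> set_pmf (sdist K p init n) \<and> a \<in> set_pmf (p x)"
  by (auto simp: sadist_def)

lemma disc_sa_pos_iff:
  fixes \<gamma> :: real
  assumes "0 \<le> \<gamma>" "\<gamma> < 1"
  shows "0 < disc_sa K p init \<gamma> xa \<longleftrightarrow> (\<exists>t. 0 < \<gamma> ^ t \<and> xa \<in> set_pmf (sadist K p init t))"
proof -
  let ?f = "\<lambda>t. \<gamma> ^ t * pmf (sadist K p init t) xa"
  have nonneg: "0 \<le> ?f t" for t
    using assms by simp
  have summable: "summable ?f"
    using assms by (intro summable_discounted) (simp_all add: pmf_le_1)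
  have "0 < suminf ?f \<longleftrightarrow> suminf ?f \<noteq> 0"
    using suminf_nonneg[OF summable nonneg] by linarith
  also have "\<dots> \<longleftrightarrow> (\<exists>t. ?f t \<noteq> 0)"
    using suminf_eq_zero_iff[OF summable nonneg] by simp
  also have "\<dots> \<longleftrightarrow> (\<exists>t. 0 < \<gamma> ^ t \<and> xa \<in> set_pmf (sadist K p init t))"
  proof -
    have "?f t \<noteq> 0 \<longleftrightarrow> 0 < \<gamma> ^ t \<and> xa \<in> set_pmf (sadist K p init t)" for t
      using zero_le_power[OF assms(1), of t] by (auto simp only: mult_eq_0_iff set_pmf_iff)
    then show ?thesis
      by simp
  qed
  finally show ?thesis
    using assms by (simp add: disc_sa_def zero_less_mult_iff)
qed

definition expected_cost ::
    "('x \<Rightarrow> 'a \<Rightarrow> 'x pmf) \<Rightarrow> ('x \<Rightarrow> 'a pmf) \<Rightarrow> ('x \<Rightarrow> 'a \<Rightarrow> real) \<Rightarrow> nat \<Rightarrow> 'x \<Rightarrow> real" where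
  "expected_cost K p c t x = measure_pmf.expectation (sadist K p (return_pmf x) t) (\<lambda>(y, a). c y a)"

lemma value_fn_expected_cost: "value_fn K c \<gamma> p x = (\<Sum>t. \<gamma> ^ t * expected_cost K p c t x)"
  by (simp add: value_fn_def expected_cost_def)

locale discounted_cost =
  fixes K :: "'x \<Rightarrow> 'a \<Rightarrow> 'x pmf" and c :: "'x \<Rightarrow> 'a \<Rightarrow> real" and \<gamma> :: real
  assumes cost_bounds: "\<And>x a. 0 \<le> c x a \<and> c x a \<le> 1"
    and discount_nonneg: "0 \<le> \<gamma>" and discount_less_1: "\<gamma> < 1"
begin

lemma expected_cost_bounds: "0 \<le> expected_cost K p c t x \<and> expected_cost K p c t x \<le> 1"
  unfolding expected_cost_def
  by (rule expectation_pmf_bounds) (auto simp: cost_bounds split: prod.splits)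

lemma abs_expected_cost_le: "\<bar>expected_cost K p c t x\<bar> \<le> 1"
  using expected_cost_bounds by (simp add: abs_le_iff)

lemma expected_cost_0: "expected_cost K p c 0 x = measure_pmf.expectation (p x) (c x)"
  by (simp add: expected_cost_def sadist_def bind_return_pmf)

lemma expected_cost_Suc:
  "expected_cost K p c (Suc t) x
     = measure_pmf.expectation (bind_pmf (p x) (K x)) (expected_cost K p c t)"
  unfolding expected_cost_def sadist_Suc_return
  by (rule expectation_bind_pmf[where B=1]) (auto simp: abs_le_iff cost_bounds split: prod.splits)

lemma summable_value_fn: "summable (\<lambda>t. \<gamma> ^ t * expected_cost K p c t x)"
  using discount_nonneg discount_less_1 abs_expected_cost_le by (rule summable_discounted)

lemma value_fn_bounds: "0 \<le> value_fn K c \<gamma> p x \<and> value_fn K c \<gamma> p x \<le> 1 / (1 - \<gamma>)"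
proof
  show "0 \<le> value_fn K c \<gamma> p x"
    unfolding value_fn_expected_cost
    by (rule suminf_nonneg[OF summable_value_fn]) (simp add: discount_nonneg expected_cost_bounds)
  have "value_fn K c \<gamma> p x \<le> (\<Sum>t. \<gamma> ^ t)"
    unfolding value_fn_expected_cost
    using discount_nonneg discount_less_1 expected_cost_bounds
    by (intro suminf_le[OF _ summable_value_fn]) (auto intro: mult_right_le_one_le simp: summable_geometric)
  then show "value_fn K c \<gamma> p x \<le> 1 / (1 - \<gamma>)"
    using discount_nonneg discount_less_1 by (simp add: suminf_geometric)
qed

lemma abs_value_fn_le: "\<bar>value_fn K c \<gamma> p x\<bar> \<le> 1 / (1 - \<gamma>)"
  using value_fn_bounds[of p x] by (simp add: abs_le_iff)

lemma expectation_value_fn: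
  "measure_pmf.expectation M (value_fn K c \<gamma> p)
     = (\<Sum>t. \<gamma> ^ t * measure_pmf.expectation M (expected_cost K p c t))"
proof -
  let ?g = "\<lambda>t y. \<gamma> ^ t * expected_cost K p c t y"
  have nonneg: "0 \<le> ?g t y" for t y
    by (simp add: discount_nonneg expected_cost_bounds)
  have int: "integrable (measure_pmf M) (?g t)" for t
    by (intro integrable_mult_right integrable_measure_pmf_bounded[OF abs_expected_cost_le])
  have expectation_bounds: "\<bar>measure_pmf.expectation M (expected_cost K p c t)\<bar> \<le> 1" for t
    by (intro abs_expectation_pmf_le abs_expected_cost_le)
  have "measure_pmf.expectation M (\<lambda>y. \<Sum>t. ?g t y) = (\<Sum>t. measure_pmf.expectation M (?g t))"
  proof (rule integral_suminf)
    show "AE y in measure_pmf M. summable (\<lambda>t. norm (?g t y))"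
      using nonneg summable_value_fn by simp
    show "summable (\<lambda>t. \<integral>y. norm (?g t y) \<partial>measure_pmf M)"
      using nonneg summable_discounted[OF discount_nonneg discount_less_1 expectation_bounds] by simp
  qed (rule int)
  then show ?thesis
    unfolding value_fn_expected_cost by simp
qed

lemma expectation_backup:
  assumes "\<And>y. \<bar>W y\<bar> \<le> B"
  shows "measure_pmf.expectation (p x) (\<lambda>a. c x a + \<gamma> * measure_pmf.expectation (K x a) W)
           = expected_cost K p c 0 x + \<gamma> * measure_pmf.expectation (bind_pmf (p x) (K x)) W"
proof -
  have "integrable (measure_pmf (p x)) (c x)"
    by (rule integrable_measure_pmf_bounded[where B=1]) (simp add: abs_le_iff cost_bounds)
  moreover have "integrable (measure_pmf (p x)) (\<lambda>a. measure_pmf.expectation (K x a) W)"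
    by (intro integrable_measure_pmf_bounded[where B=B] abs_expectation_pmf_le assms)
  ultimately show ?thesis
    by (simp add: expected_cost_0 expectation_bind_pmf[OF assms])
qed

lemma value_fn_bellman:
  "value_fn K c \<gamma> p x =
     measure_pmf.expectation (p x) (\<lambda>a. c x a + \<gamma> * measure_pmf.expectation (K x a) (value_fn K c \<gamma> p))"
proof -
  let ?step = "bind_pmf (p x) (K x)"
  have "value_fn K c \<gamma> p x - expected_cost K p c 0 x
          = (\<Sum>t. \<gamma> ^ Suc t * expected_cost K p c (Suc t) x)"
    unfolding value_fn_expected_cost using suminf_split_head[OF summable_value_fn] by simp
  also have "\<dots> = \<gamma> * (\<Sum>t. \<gamma> ^ t * measure_pmf.expectation ?step (expected_cost K p c t))"
    using summable_discounted[OF discount_nonneg discount_less_1,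
        of "\<lambda>t. measure_pmf.expectation ?step (expected_cost K p c t)"]
      expectation_pmf_bounds[of 0 "expected_cost K p c _" 1] expected_cost_bounds
    by (subst suminf_mult[symmetric]) (auto simp: expected_cost_Suc mult.assoc abs_le_iff)
  also have "\<dots> = \<gamma> * measure_pmf.expectation ?step (value_fn K c \<gamma> p)"
    by (simp add: expectation_value_fn)
  finally show ?thesis
    using expectation_backup[of "value_fn K c \<gamma> p" "1 / (1 - \<gamma>)" p x, OF abs_value_fn_le] by linarith
qed

lemma value_fn_le_supersolution:
  assumes nonneg: "\<And>y. 0 \<le> W y" and bounded: "\<And>y. W y \<le> B"
    and super: "\<And>y. measure_pmf.expectation (p y)
                  (\<lambda>a. c y a + \<gamma> * measure_pmf.expectation (K y a) W) \<le> W y"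
  shows "value_fn K c \<gamma> p x \<le> W x"
proof -
  have abs_W: "\<bar>W y\<bar> \<le> B" for y
    using nonneg[of y] bounded[of y] by simp
  have "(\<Sum>t<n. \<gamma> ^ t * expected_cost K p c t y) \<le> W y" for n y
  proof (induction n arbitrary: y)
    case 0
    then show ?case using nonneg by simp
  next
    case (Suc n)
    let ?step = "bind_pmf (p y) (K y)" and ?g = "\<lambda>t z. \<gamma> ^ t * expected_cost K p c t z"
    have int: "integrable (measure_pmf ?step) (?g t)" for t
      by (intro integrable_mult_right integrable_measure_pmf_bounded[OF abs_expected_cost_le])
    have "(\<Sum>t<Suc n. ?g t y) = expected_cost K p c 0 y + \<gamma> * (\<Sum>t<n. measure_pmf.expectation ?step (?g t))"
      by (simp add: sum.lessThan_Suc_shift expected_cost_Suc sum_distrib_left mult.assoc del: sum.lessThan_Suc)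
    also have "(\<Sum>t<n. measure_pmf.expectation ?step (?g t))
                 = measure_pmf.expectation ?step (\<lambda>z. \<Sum>t<n. ?g t z)"
      by (rule Bochner_Integration.integral_sum[symmetric]) (rule int)
    also have "\<dots> \<le> measure_pmf.expectation ?step W"
      by (rule integral_mono) (auto intro: Suc.IH integrable_measure_pmf_bounded[OF abs_W] int)
    also have "expected_cost K p c 0 y + \<gamma> * measure_pmf.expectation ?step W \<le> W y"
      using super[of y] expectation_backup[of W B p y, OF abs_W] by linarith
    finally show ?case
      using discount_nonneg by (simp add: mult_left_mono)
  qed
  then show ?thesis
    unfolding value_fn_expected_cost by (rule suminf_le_const[OF summable_value_fn])
qed

end

locale safety_mdp = discounted_cost P "cost s_tri" \<gamma>
  for P :: "'s \<Rightarrow> 'a \<Rightarrow> 's pmf" and s_tri :: 's and \<gamma> :: real +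
  fixes s_circ :: 's and pibar :: "'s \<Rightarrow> 'a pmf"
  assumes distinct: "s_tri \<noteq> s_circ"
    and tri_to_circ: "\<And>a. P s_tri a = return_pmf s_circ"
    and circ_absorb: "\<And>a. P s_circ a = return_pmf s_circ"
    and optimal: "\<And>\<pi> s. value_fn P (cost s_tri) \<gamma> pibar s \<le> value_fn P (cost s_tri) \<gamma> \<pi> s"
begin

abbreviation "Vopt \<equiv> value_fn P (cost s_tri) \<gamma> pibar"
abbreviation "Qopt \<equiv> qvalue P (cost s_tri) \<gamma> pibar"

lemma value_fn_le_not_absorbed:
  "value_fn P (cost s_tri) \<gamma> \<pi> x \<le> (if x = s_circ then 0 else 1)"
proof (rule value_fn_le_supersolution[where B=1])
  fix y
  let ?W = "\<lambda>x. if x = s_circ then 0 else 1 :: real"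
  let ?backup = "\<lambda>a. cost s_tri y a + \<gamma> * measure_pmf.expectation (P y a) ?W"
  have "0 \<le> ?backup a \<and> ?backup a \<le> ?W y" for a
  proof -
    have "0 \<le> \<gamma> * measure_pmf.expectation (P y a) ?W \<and> \<gamma> * measure_pmf.expectation (P y a) ?W \<le> \<gamma>"
      using expectation_pmf_bounds[of 0 ?W 1 "P y a"] discount_nonneg
      by (simp add: mult_left_le)
    then show ?thesis
      using distinct discount_less_1
      by (auto simp: cost_def tri_to_circ circ_absorb)
  qed
  then show "measure_pmf.expectation (\<pi> y) ?backup \<le> ?W y"
    using expectation_pmf_bounds[of 0 ?backup "?W y" "\<pi> y"] by blast
qed simp_all

lemma value_fn_unit_bounds: "0 \<le> value_fn P (cost s_tri) \<gamma> \<pi> x \<and> value_fn P (cost s_tri) \<gamma> \<pi> x \<le> 1"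
  using value_fn_bounds[of \<pi> x] value_fn_le_not_absorbed[of \<pi> x] by (auto split: if_splits)

lemma abs_value_fn_le_1: "\<bar>value_fn P (cost s_tri) \<gamma> \<pi> x\<bar> \<le> 1"
  using value_fn_unit_bounds[of \<pi> x] by simp

lemma value_fn_circ: "value_fn P (cost s_tri) \<gamma> \<pi> s_circ = 0"
  using value_fn_unit_bounds[of \<pi> s_circ] value_fn_le_not_absorbed[of \<pi> s_circ] by simp

lemma value_fn_tri: "value_fn P (cost s_tri) \<gamma> \<pi> s_tri = 1"
  by (subst value_fn_bellman) (simp add: tri_to_circ value_fn_circ cost_def)

lemma polQ_extQ_Qopt: "polQ (extQ s_tri s_circ Qopt) pibar = Vopt"
proof
  fix s
  show "polQ (extQ s_tri s_circ Qopt) pibar s = Vopt s"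
    using distinct value_fn_bellman[of pibar s]
    by (cases "s = s_tri \<or> s = s_circ")
       (auto simp: polQ_def extQ_def qvalue_def value_fn_tri value_fn_circ)
qed

text \<open>If \<open>Q\<^sup>*(s,a) < V\<^sup>*(s)\<close>, then \<open>V\<^sup>*\<close> is a supersolution for the policy that deviates to \<open>a\<close>
  at \<open>s\<close> only, and that policy would strictly beat \<open>\<pi>\<^sup>*\<close> at \<open>s\<close>.\<close>
lemma Vopt_le_Qopt: "Vopt s \<le> Qopt s a"
proof (rule ccontr)
  assume "\<not> Vopt s \<le> Qopt s a"
  then have less: "Qopt s a < Vopt s" by simp
  define \<pi> where "\<pi> = pibar(s := return_pmf a)"
  have super: "measure_pmf.expectation (\<pi> x)
      (\<lambda>b. cost s_tri x b + \<gamma> * measure_pmf.expectation (P x b) Vopt) \<le> Vopt x" for x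
    using less value_fn_bellman[of pibar x] by (cases "x = s") (simp_all add: \<pi>_def qvalue_def)
  have le_Vopt: "value_fn P (cost s_tri) \<gamma> \<pi> x \<le> Vopt x" for x
    by (rule value_fn_le_supersolution[where B=1]) (use value_fn_unit_bounds super in auto)
  have "value_fn P (cost s_tri) \<gamma> \<pi> s
          = cost s_tri s a + \<gamma> * measure_pmf.expectation (P s a) (value_fn P (cost s_tri) \<gamma> \<pi>)"
    by (subst value_fn_bellman) (simp add: \<pi>_def)
  also have "\<dots> \<le> Qopt s a"
    unfolding qvalue_def using discount_nonneg
    by (intro add_left_mono mult_left_mono integral_mono)
       (auto intro: integrable_measure_pmf_bounded abs_value_fn_le_1 le_Vopt)
  finally show False
    using less optimal[of s \<pi>] by linarith
qed

lemma optimal_rule_in_G0: "(Qopt, pibar, 0) \<in> G0 P \<gamma> d0 s_tri s_circ (measure_pmf.expectation d0 Vopt)"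
proof -
  have "0 \<le> Qopt s a \<and> Qopt s a \<le> \<gamma>" if "safe s_tri s_circ s" for s a
    using that expectation_pmf_bounds[of 0 Vopt 1 "P s a"] value_fn_unit_bounds discount_nonneg
    by (auto simp: qvalue_def cost_def safe_def mult_left_le)
  then show ?thesis
    by (simp add: G0_def admissible_def polQ_extQ_Qopt qvalue_def)
qed

end

locale rule_in_G0 = safety_mdp P s_tri \<gamma> s_circ pibar
  for P :: "'s \<Rightarrow> 'a \<Rightarrow> 's pmf" and s_tri \<gamma> s_circ pibar +
  fixes d0 :: "'s pmf" and Q :: "'s \<Rightarrow> 'a \<Rightarrow> real" and \<mu> :: "'s \<Rightarrow> 'a pmf"
  assumes in_G0: "(Q, \<mu>, 0) \<in> G0 P \<gamma> d0 s_tri s_circ (measure_pmf.expectation d0 Vopt)"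
begin

abbreviation "W \<equiv> polQ (extQ s_tri s_circ Q) \<mu>"

lemma Q_bounds: "safe s_tri s_circ s \<Longrightarrow> 0 \<le> Q s a \<and> Q s a \<le> \<gamma>"
  using in_G0 by (auto simp: G0_def admissible_def)

lemma Q_ge_backup:
  "safe s_tri s_circ s \<Longrightarrow> cost s_tri s a + \<gamma> * measure_pmf.expectation (P s a) W \<le> Q s a"
  using in_G0 by (auto simp: G0_def admissible_def)

lemma expectation_d0_W: "measure_pmf.expectation d0 W = measure_pmf.expectation d0 Vopt"
  using in_G0 by (simp add: G0_def)

lemma W_tri: "W s_tri = 1"
  by (simp add: polQ_def extQ_def)

lemma W_circ: "W s_circ = 0"
  using distinct by (simp add: polQ_def extQ_def)

lemma W_safe: "safe s_tri s_circ s \<Longrightarrow> W s = measure_pmf.expectation (\<mu> s) (Q s)"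
  by (simp add: polQ_def extQ_def safe_def)

lemma W_unit_bounds: "0 \<le> W s \<and> W s \<le> 1"
proof (cases "safe s_tri s_circ s")
  case True
  then show ?thesis
    using expectation_pmf_bounds[of 0 "Q s" \<gamma> "\<mu> s"] Q_bounds discount_less_1
    by (simp add: W_safe)
next
  case False
  then show ?thesis
    using W_tri W_circ by (auto simp: safe_def)
qed

lemma abs_W_le_1: "\<bar>W s\<bar> \<le> 1"
  using W_unit_bounds[of s] by simp

lemma W_supersolution:
  "measure_pmf.expectation (\<mu> x) (\<lambda>a. cost s_tri x a + \<gamma> * measure_pmf.expectation (P x a) W) \<le> W x"
proof (cases "safe s_tri s_circ x")
  case True
  let ?backup = "\<lambda>a. cost s_tri x a + \<gamma> * measure_pmf.expectation (P x a) W"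
  have "\<bar>?backup a\<bar> \<le> 1" for a
    using Q_ge_backup[OF True, of a] Q_bounds[OF True, of a] discount_less_1
      expectation_pmf_bounds[of 0 W 1 "P x a"] W_unit_bounds discount_nonneg cost_bounds[of x a]
    by (auto simp: abs_le_iff)
  moreover have "\<bar>Q x a\<bar> \<le> 1" for a
    using Q_bounds[OF True, of a] discount_less_1 by simp
  ultimately have "measure_pmf.expectation (\<mu> x) ?backup \<le> measure_pmf.expectation (\<mu> x) (Q x)"
    by (intro integral_mono integrable_measure_pmf_bounded Q_ge_backup[OF True])
  then show ?thesis
    by (simp add: W_safe[OF True])
next
  case False
  then show ?thesis
    using distinct by (auto simp: safe_def tri_to_circ circ_absorb cost_def W_tri W_circ)
qed

lemma Vopt_le_W: "Vopt x \<le> W x"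
proof -
  have "value_fn P (cost s_tri) \<gamma> \<mu> x \<le> W x"
    by (rule value_fn_le_supersolution[where B=1]) (use W_unit_bounds W_supersolution in auto)
  then show ?thesis
    using optimal[of x \<mu>] by linarith
qed

lemma W_eq_Vopt_on_d0: "s \<in> set_pmf d0 \<Longrightarrow> W s = Vopt s"
  using expectation_d0_W
  by (intro eq_on_set_pmf_if_expectation_le[where B=1, symmetric])
     (auto simp: Vopt_le_W abs_value_fn_le_1 abs_W_le_1)

lemma W_eq_Vopt_if_discount_0:
  assumes "\<gamma> = 0"
  shows "W x = Vopt x"
proof (cases "safe s_tri s_circ x")
  case True
  then have "Q x = (\<lambda>_. 0)"
    using Q_bounds[OF True] assms by (intro ext) (simp add: order_antisym)
  then show ?thesis
    using True assms value_fn_bellman[of pibar x] by (simp add: W_safe safe_def cost_def)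
next
  case False
  then show ?thesis
    by (auto simp: safe_def W_tri W_circ value_fn_tri value_fn_circ)
qed

lemma interv_set_Qopt:
  "(s, a) \<in> interv_set s_tri s_circ Qopt pibar 0 \<longleftrightarrow> safe s_tri s_circ s \<and> Vopt s < Qopt s a"
  by (auto simp: interv_set_def polQ_extQ_Qopt extQ_def safe_def)

lemma unblocked_step:
  assumes eq: "W s = Vopt s" and unblocked: "(s, a) \<notin> interv_set s_tri s_circ Q \<mu> 0"
    and succ: "s' \<in> set_pmf (P s a)"
  shows "(s, a) \<notin> interv_set s_tri s_circ Qopt pibar 0 \<and> W s' = Vopt s'"
proof (cases "safe s_tri s_circ s")
  case False
  then have "s' = s_circ"
    using succ by (auto simp: safe_def tri_to_circ circ_absorb)
  then show ?thesis
    using False by (simp add: interv_set_Qopt W_circ value_fn_circ)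
next
  case True
  have "Q s a \<le> W s"
    using unblocked True by (simp add: interv_set_def extQ_def safe_def)
  have E_le: "measure_pmf.expectation (P s a) Vopt \<le> measure_pmf.expectation (P s a) W"
    by (rule integral_mono)
       (auto intro: integrable_measure_pmf_bounded[where B=1] abs_value_fn_le_1 abs_W_le_1 Vopt_le_W)
  have "Qopt s a \<le> cost s_tri s a + \<gamma> * measure_pmf.expectation (P s a) W"
    using E_le discount_nonneg by (simp add: qvalue_def mult_left_mono)
  also have "\<dots> \<le> Q s a"
    by (rule Q_ge_backup[OF True])
  finally have Qopt_le: "Qopt s a \<le> Vopt s"
    using \<open>Q s a \<le> W s\<close> eq by linarith
  have "W s' = Vopt s'"
  proof (cases "\<gamma> = 0")
    case True
    then show ?thesis by (rule W_eq_Vopt_if_discount_0)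
  next
    case False
    have "\<gamma> * measure_pmf.expectation (P s a) W \<le> \<gamma> * measure_pmf.expectation (P s a) Vopt"
      using Vopt_le_Qopt[of s a] Qopt_le Q_ge_backup[OF True, of a] \<open>Q s a \<le> W s\<close> eq
      by (simp add: qvalue_def)
    then have "measure_pmf.expectation (P s a) W \<le> measure_pmf.expectation (P s a) Vopt"
      using False discount_nonneg by simp
    then show ?thesis
      using succ
      by (intro eq_on_set_pmf_if_expectation_le[where B=1, symmetric])
         (auto simp: Vopt_le_W abs_value_fn_le_1 abs_W_le_1)
  qed
  then show ?thesis
    using Qopt_le by (simp add: interv_set_Qopt)
qed

lemma reachable_under_optimal_rule:
  assumes "Some s \<in> set_pmf (sdist (abs_P P (interv_set s_tri s_circ Q \<mu> 0)) (abs_pol \<pi>) (map_pmf Some d0) n)"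
  shows "Some s \<in> set_pmf (sdist (abs_P P (interv_set s_tri s_circ Qopt pibar 0)) (abs_pol \<pi>) (map_pmf Some d0) n)
    \<and> W s = Vopt s"
  using assms
proof (induction n arbitrary: s)
  case 0
  then show ?case
    using W_eq_Vopt_on_d0 by auto
next
  case (Suc n)
  let ?I = "interv_set s_tri s_circ Q \<mu> 0" and ?J = "interv_set s_tri s_circ Qopt pibar 0"
  from Suc.prems obtain x a
    where x: "x \<in> set_pmf (sdist (abs_P P ?I) (abs_pol \<pi>) (map_pmf Some d0) n)"
      and a: "a \<in> set_pmf (abs_pol \<pi> x)" and s: "Some s \<in> set_pmf (abs_P P ?I x a)"
    by auto
  then obtain s0 where s0: "x = Some s0" "(s0, a) \<notin> ?I" "s \<in> set_pmf (P s0 a)"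
    by (cases x) (auto simp: abs_P_def split: if_splits)
  with Suc.IH[of s0] x have IH: "Some s0 \<in> set_pmf (sdist (abs_P P ?J) (abs_pol \<pi>) (map_pmf Some d0) n)"
    "W s0 = Vopt s0"
    by auto
  with unblocked_step s0 have "(s0, a) \<notin> ?J" "W s = Vopt s"
    by blast+
  moreover from this s0 have "Some s \<in> set_pmf (abs_P P ?J (Some s0) a)"
    by (simp add: abs_P_def)
  ultimately show ?case
    using IH a s0 by auto
qed

lemma supp_SA_dtilde_subset:
  "supp_SA (dtilde P \<gamma> d0 (interv_set s_tri s_circ Q \<mu> 0) \<pi>)
     \<subseteq> supp_SA (dtilde P \<gamma> d0 (interv_set s_tri s_circ Qopt pibar 0) \<pi>)"
  using reachable_under_optimal_rule discount_nonneg discount_less_1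
  by (auto simp: supp_SA_def dtilde_def disc_sa_pos_iff set_pmf_sadist abs_pol_def)

end

theorem mainTheorem5:
  fixes P :: "'s::countable \<Rightarrow> 'a::countable \<Rightarrow> 's pmf"
    and r :: "'s \<Rightarrow> 'a \<Rightarrow> real"
    and \<gamma> :: real
    and d0 :: "'s pmf"
    and s_tri s_circ :: 's
    and pibar :: "'s \<Rightarrow> 'a pmf"
  assumes r_range: "\<And>s a. 0 \<le> r s a \<and> r s a \<le> 1"
    and gamma: "0 \<le> \<gamma>" "\<gamma> < 1"
    and distinct: "s_tri \<noteq> s_circ"
    and tri_to_circ: "\<And>a. P s_tri a = return_pmf s_circ"
    and circ_absorb: "\<And>a. P s_circ a = return_pmf s_circ"
    and r_unsafe: "\<And>a. r s_tri a = 0" "\<And>a. r s_circ a = 0"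
    and d0_circ: "pmf d0 s_circ = 0"
    and optimal: "\<And>\<pi> s. value_fn P (cost s_tri) \<gamma> pibar s \<le> value_fn P (cost s_tri) \<gamma> \<pi> s"
  shows "(qvalue P (cost s_tri) \<gamma> pibar, pibar, 0)
           \<in> G0 P \<gamma> d0 s_tri s_circ
               (measure_pmf.expectation d0 (value_fn P (cost s_tri) \<gamma> pibar))
       \<and> (\<forall>Q \<mu> \<pi>. (Q, \<mu>, 0) \<in> G0 P \<gamma> d0 s_tri s_circ
               (measure_pmf.expectation d0 (value_fn P (cost s_tri) \<gamma> pibar)) \<longrightarrow>
            supp_SA (dtilde P \<gamma> d0 (interv_set s_tri s_circ Q \<mu> 0) \<pi>)
              \<subseteq> supp_SA (dtilde P \<gamma> d0
                   (interv_set s_tri s_circ (qvalue P (cost s_tri) \<gamma> pibar) pibar 0) \<pi>))"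
proof -
  interpret safety_mdp P s_tri \<gamma> s_circ pibar
    using gamma distinct tri_to_circ circ_absorb optimal
    by unfold_locales (auto simp: cost_def)
  have "supp_SA (dtilde P \<gamma> d0 (interv_set s_tri s_circ Q \<mu> 0) \<pi>)
          \<subseteq> supp_SA (dtilde P \<gamma> d0 (interv_set s_tri s_circ Qopt pibar 0) \<pi>)"
    if "(Q, \<mu>, 0) \<in> G0 P \<gamma> d0 s_tri s_circ (measure_pmf.expectation d0 Vopt)" for Q \<mu> \<pi>
  proof -
    interpret rule_in_G0 P s_tri \<gamma> s_circ pibar d0 Q \<mu>
      by unfold_locales (fact that)
    show ?thesis
      by (fact supp_SA_dtilde_subset)
  qed
  then show ?thesis
    using optimal_rule_in_G0 by blast
qed

end
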